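(* Consider the system, planning problem and lower-layer problem defined in the context, and suppose Assumptions (A1) and (A3) hold. Let $k_p\ge0$, let $(x_p^\star(k_p|k_p),u_p^\star(k_p|k_p),i)$ come from an optimal solution of the planning problem $\mathcal{P}(x(k_pM))$, and let the reference be $x_{\text{ref}}(k_pM+j)=A^jx_p^\star(k_p|k_p)+\sum_{m=0}^{j-1}A^mBu_p^\star(k_p|k_p)$, $j=0,\dots,M$, and assume it satisfies $Cx_{\text{ref}}(k_pM+j)\notin\mathbb{O}\oplus(-C)\mathbb{Z}_i$ for $j=0,\dots,M$. Let $k\in\{k_pM,\dots,k_pM+M-1\}$. If the lower-layer problem $\mathcal{L}(x(k),\{x_{\text{ref}}\},i,k)$ is feasible and $u(k)=v^\star(k|k)$ is the applied input, then $x(k)\in\mathbb{X}_i\subseteq\mathbb{X}$, $u(k)\in\mathbb{U}_i\subseteq\mathbb{U}$, and $y(k)=Cx(k)\notin\mathbb{O}$, i.e. for every $\ell\in\{1,\dots,H\}$ there is $a$ with $E_{\ell,a}y(k)\ge f_{\ell,a}$.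
   Context: System: $x(k+1)=Ax(k)+Bu(k)+w(k)$, $y(k)=Cx(k)$, with $x(k)\in\mathbb{R}^n$, $u(k)\in\mathbb{R}^m$, $y(k)\in\mathbb{R}^p$, unknown disturbance $w(k)\in\mathbb{R}^n$, and closed convex constraint sets $\mathbb{X}\subseteq\mathbb{R}^n$, $\mathbb{U}\subseteq\mathbb{R}^m$. Obstacles: for $\ell=1,\dots,H$, $\mathbb{O}_\ell=\{y\in\mathbb{R}^p: E_\ell y<f_\ell\}$ (componentwise), $E_\ell\in\mathbb{R}^{q_\ell\times p}$, $f_\ell\in\mathbb{R}^{q_\ell}$, each the interior of a compact convex polytope; $\mathbb{O}=\bigcup_{\ell=1}^H\mathbb{O}_\ell$. Notation: $\mathbb{X}\oplus\mathbb{Y}=\{x+y:x\in\mathbb{X},y\in\mathbb{Y}\}$, $\mathbb{X}\ominus\mathbb{Y}=\{x: \{x\}\oplus\mathbb{Y}\subseteq\mathbb{X}\}$, $G\mathbb{S}=\{Gs:s\in\mathbb{S}\}$; $\operatorname{rem}(k,M)$ is the remainder of $k$ divided by $M$; $\|x\|_Q^2=x^\top Qx$. Modes: $N_w$ modes; for each $i$, $\mathbb{X}_i\subseteq\mathbb{X}$, $\mathbb{U}_i\subseteq\mathbb{U}$ closed convex polytopes, $\mathbb{W}_i$ compact convex polytope. (A1): if $x(k)\in\mathbb{X}_i$ and $u(k)\in\mathbb{U}_i$ then $w(k)\in\mathbb{W}_i$. $K\in\mathbb{R}^{m\times n}$ with $A+BK$ Schur stable; $\mathbb{Z}_i$ compact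 convex polytopes with $(A+BK)\mathbb{Z}_i\oplus\mathbb{W}_i\subseteq\mathbb{Z}_i$; $\mathbb{E}_i(0)=\{0\}$, $\mathbb{E}_i(j+1)=(A+BK)\mathbb{E}_i(j)\oplus\mathbb{W}_i$. $M>1$ integer, $A_p=A^M$, $B_p=\sum_{i=0}^{M-1}A^iB$. (A3) Inter-sample sets $\mathbb{I}_i\subseteq\mathbb{R}^n\times\mathbb{R}^m$: if $(x_p,u_p)\in\mathbb{I}_i$ then for $\ell=1,\dots,M-1$: $A^\ell x_p+\sum_{m=0}^{\ell-1}A^mBu_p\in\mathbb{X}_i\ominus\mathbb{Z}_i$ and $C(A^\ell x_p+\sum_{m=0}^{\ell-1}A^mBu_p)\notin\mathbb{O}\oplus(-C)\mathbb{Z}_i$. Terminal sets $\mathbb{X}^f_i\subseteq\mathbb{R}^n$ are given. Planning problem $\mathcal{P}(\xi)$ at planning index $k_p$, $\xi=x(k_pM)$, horizon $N$, weights $\alpha_x,\alpha_u\ge0$, goal $x_{\text{goal}}$: minimize over $x_p(k_p+j|k_p)$ ($j=0,\dots,N$), $u_p(k_p+j|k_p)$ ($j=0,\dots,N-1$), $i$ the cost $\|x_{\text{goal}}-x_p(k_p+N|k_p)\|_\infty+\sum_{j=0}^{N-1}(\alpha_x\|x_p(k_p+j|k_p)\|_\infty+\alpha_u\|u_p(k_p+j|k_p)\|_\infty)$ subject to $i\in\{1,\dots,N_w\}$, $\xi-x_p(k_p|k_p)\in\mathbb{Z}_i$, and for all $j\in\{0,\dots,N-1\}$: $x_p(k_p+j+1|k_p)=A_px_p(k_p+j|k_p)+B_pu_p(k_p+j|k_p)$,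 $x_p(k_p+j|k_p)\in\mathbb{X}_i\ominus\mathbb{Z}_i$, $u_p(k_p+j|k_p)\in\mathbb{U}_i\ominus K\mathbb{Z}_i$, $Cx_p(k_p+j|k_p)\notin\mathbb{O}\oplus(-C)\mathbb{Z}_i$, $(x_p(k_p+j|k_p),u_p(k_p+j|k_p))\in\mathbb{I}_i$; and $x_p(k_p+N|k_p)\in\mathbb{X}^f_i$. Lower-layer problem $\mathcal{L}(x(k),\{x_{\text{ref}}\},i,k)$: with $L_k=M-\operatorname{rem}(k,M)$, minimize over $z(k+j|k)$ ($j=0,\dots,L_k$), $v(k+j|k)$ ($j=0,\dots,L_k-1$) the cost $\sum_{j=k}^{k+L_k-1}(\|x_{\text{ref}}(j)-z(j|k)\|_Q^2+\|v(j|k)\|_R^2)+\|x_{\text{ref}}(k+L_k)-z(k+L_k|k)\|_P^2$ ($Q,P,R$ positive definite) subject to $z(k|k)=x(k)$, $z(k+j+1|k)=Az(k+j|k)+Bv(k+j|k)$, and for the relevant $j$: $z(k+j|k)\in\mathbb{X}_i\ominus\mathbb{E}_i(j)$, $v(k+j|k)\in\mathbb{U}_i\ominus K\mathbb{E}_i(j)$, $C(z(k+j|k)-x_{\text{ref}}(k+j))\in C(\mathbb{Z}_i\ominus\mathbb{E}_i(j))$, and $z(k+L_k|k)-x_{\text{ref}}(k+L_k)\in\mathbb{Z}_i\ominus\mathbb{E}_i(L_k)$. Its optimal input sequence is denoted $v^\star(\cdot|k)$. *)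

theory Defs
  imports "HOL-Analysis.Analysis"
begin

definition msum :: "'a::ab_group_add set \<Rightarrow> 'a set \<Rightarrow> 'a set" where
  "msum X Y = {x + y | x y. x \<in> X \<and> y \<in> Y}"

definition pdiff :: "'a::ab_group_add set \<Rightarrow> 'a set \<Rightarrow> 'a set" where
  "pdiff X Y = {x. msum {x} Y \<subseteq> X}"

definition limg :: "real^'a^'b \<Rightarrow> (real^'a) set \<Rightarrow> (real^'b) set" where
  "limg G S = (\<lambda>s. G *v s) ` S"

fun mpow :: "real^'n^'n \<Rightarrow> nat \<Rightarrow> real^'n^'n" where
  "mpow A 0 = mat 1"
| "mpow A (Suc k) = A ** mpow A k"

definition cmat :: "real^'n^'m \<Rightarrow> complex^'n^'m" where
  "cmat M = (\<chi> i j. complex_of_real (M $ i $ j))"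

definition schur_stable :: "real^'n^'n \<Rightarrow> bool" where
  "schur_stable M \<longleftrightarrow>
     (\<forall>(l::complex) (v::complex^'n). v \<noteq> 0 \<and> cmat M *v v = l *s v \<longrightarrow> cmod l < 1)"

definition pos_def :: "real^'n^'n \<Rightarrow> bool" where
  "pos_def Q \<longleftrightarrow> transpose Q = Q \<and> (\<forall>x. x \<noteq> 0 \<longrightarrow> x \<bullet> (Q *v x) > 0)"

definition qf :: "real^'n^'n \<Rightarrow> real^'n \<Rightarrow> real" where
  "qf Q x = x \<bullet> (Q *v x)"

fun Eset :: "real^'n^'n \<Rightarrow> (real^'n) set \<Rightarrow> nat \<Rightarrow> (real^'n) set" where
  "Eset Acl W 0 = {0}"
| "Eset Acl W (Suc j) = msum (limg Acl (Eset Acl W j)) W"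

text \<open>Obstacles O_l = {y. E_l y < f_l componentwise}; E_l has rows E l a (a < q l).\<close>
definition obst :: "(nat \<Rightarrow> nat \<Rightarrow> real^'p) \<Rightarrow> (nat \<Rightarrow> nat \<Rightarrow> real) \<Rightarrow> (nat \<Rightarrow> nat) \<Rightarrow> nat \<Rightarrow> (real^'p) set" where
  "obst E f q l = {y. \<forall>a < q l. E l a \<bullet> y < f l a}"

definition obstacles :: "(nat \<Rightarrow> nat \<Rightarrow> real^'p) \<Rightarrow> (nat \<Rightarrow> nat \<Rightarrow> real) \<Rightarrow> (nat \<Rightarrow> nat) \<Rightarrow> nat \<Rightarrow> (real^'p) set" where
  "obstacles E f q H = (\<Union>l\<in>{1..H}. obst E f q l)"

definition interp :: "real^'n^'n \<Rightarrow> real^'m^'n \<Rightarrow> real^'n \<Rightarrow> real^'m \<Rightarrow> nat \<Rightarrow> real^'n" where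
  "interp A B xp up l = mpow A l *v xp + (\<Sum>m<l. (mpow A m ** B) *v up)"

definition Ap :: "real^'n^'n \<Rightarrow> nat \<Rightarrow> real^'n^'n" where
  "Ap A M = mpow A M"

definition Bp :: "real^'n^'n \<Rightarrow> real^'m^'n \<Rightarrow> nat \<Rightarrow> real^'m^'n" where
  "Bp A B M = (\<Sum>i<M. mpow A i ** B)"

text \<open>Planning problem P(xi); xp j stands for x_p(k_p+j|k_p), up j for u_p(k_p+j|k_p).\<close>
definition plan_feasible ::
  "real^'n^'n \<Rightarrow> real^'m^'n \<Rightarrow> real^'n^'p \<Rightarrow> real^'n^'m \<Rightarrow> nat \<Rightarrow> nat \<Rightarrow> nat \<Rightarrow>
   (nat \<Rightarrow> (real^'n) set) \<Rightarrow> (nat \<Rightarrow> (real^'m) set) \<Rightarrow> (nat \<Rightarrow> (real^'n) set) \<Rightarrow>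
   (nat \<Rightarrow> ((real^'n) \<times> (real^'m)) set) \<Rightarrow> (nat \<Rightarrow> (real^'n) set) \<Rightarrow> (real^'p) set \<Rightarrow>
   real^'n \<Rightarrow> (nat \<Rightarrow> real^'n) \<Rightarrow> (nat \<Rightarrow> real^'m) \<Rightarrow> nat \<Rightarrow> bool" where
  "plan_feasible A B C K M N Nw Xi Ui Zi Ii Xf Obs \<xi> xp up i \<longleftrightarrow>
     i \<in> {1..Nw} \<and> \<xi> - xp 0 \<in> Zi i \<and>
     (\<forall>j<N. xp (Suc j) = Ap A M *v xp j + Bp A B M *v up j
        \<and> xp j \<in> pdiff (Xi i) (Zi i)
        \<and> up j \<in> pdiff (Ui i) (limg K (Zi i))
        \<and> C *v xp j \<notin> msum Obs (limg (- C) (Zi i))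
        \<and> (xp j, up j) \<in> Ii i)
     \<and> xp N \<in> Xf i"

definition plan_cost :: "real \<Rightarrow> real \<Rightarrow> real^'n \<Rightarrow> nat \<Rightarrow> (nat \<Rightarrow> real^'n) \<Rightarrow> (nat \<Rightarrow> real^'m) \<Rightarrow> real" where
  "plan_cost ax au xgoal N xp up =
     infnorm (xgoal - xp N) + (\<Sum>j<N. ax * infnorm (xp j) + au * infnorm (up j))"

definition plan_optimal where
  "plan_optimal A B C K M N Nw Xi Ui Zi Ii Xf Obs ax au xgoal \<xi> xp up i \<longleftrightarrow>
     plan_feasible A B C K M N Nw Xi Ui Zi Ii Xf Obs \<xi> xp up i \<and>
     (\<forall>xp' up' i'. plan_feasible A B C K M N Nw Xi Ui Zi Ii Xf Obs \<xi> xp' up' i' \<longrightarrow>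
        plan_cost ax au xgoal N xp up \<le> plan_cost ax au xgoal N xp' up')"

text \<open>Lower-layer problem L(x(k),{x_ref},i,k); z j stands for z(k+j|k), v j for v(k+j|k).\<close>
definition low_feasible ::
  "real^'n^'n \<Rightarrow> real^'m^'n \<Rightarrow> real^'n^'p \<Rightarrow> real^'n^'m \<Rightarrow> nat \<Rightarrow>
   (nat \<Rightarrow> (real^'n) set) \<Rightarrow> (nat \<Rightarrow> (real^'m) set) \<Rightarrow> (nat \<Rightarrow> (real^'n) set) \<Rightarrow> (nat \<Rightarrow> (real^'n) set) \<Rightarrow>
   real^'n \<Rightarrow> (nat \<Rightarrow> real^'n) \<Rightarrow> nat \<Rightarrow> nat \<Rightarrow> (nat \<Rightarrow> real^'n) \<Rightarrow> (nat \<Rightarrow> real^'m) \<Rightarrow> bool" where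
  "low_feasible A B C K M Xi Ui Zi Wi xk xref i k z v \<longleftrightarrow>
     (let L = M - k mod M; E = Eset (A + B ** K) (Wi i) in
       z 0 = xk \<and>
       (\<forall>j<L. z (Suc j) = A *v z j + B *v v j) \<and>
       (\<forall>j<L. z j \<in> pdiff (Xi i) (E j)
              \<and> v j \<in> pdiff (Ui i) (limg K (E j))
              \<and> C *v (z j - xref (k + j)) \<in> limg C (pdiff (Zi i) (E j))) \<and>
       z L - xref (k + L) \<in> pdiff (Zi i) (E L))"

definition low_cost ::
  "real^'n^'n \<Rightarrow> real^'m^'m \<Rightarrow> real^'n^'n \<Rightarrow> nat \<Rightarrow> (nat \<Rightarrow> real^'n) \<Rightarrow> nat \<Rightarrow>
   (nat \<Rightarrow> real^'n) \<Rightarrow> (nat \<Rightarrow> real^'m) \<Rightarrow> real" where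
  "low_cost Q R P M xref k z v =
     (let L = M - k mod M in
       (\<Sum>j<L. qf Q (xref (k + j) - z j) + qf R (v j)) + qf P (xref (k + L) - z L))"

definition low_optimal where
  "low_optimal A B C K M Xi Ui Zi Wi Q R P xk xref i k z v \<longleftrightarrow>
     low_feasible A B C K M Xi Ui Zi Wi xk xref i k z v \<and>
     (\<forall>z' v'. low_feasible A B C K M Xi Ui Zi Wi xk xref i k z' v' \<longrightarrow>
        low_cost Q R P M xref k z v \<le> low_cost Q R P M xref k z' v')"

end

theory Submission
  imports Defs
begin

text \<open>With \<open>\<E>\<^sub>i(0) = {0}\<close>, the \<open>j = 0\<close> constraints of the lower-layer problem,
  together with \<open>z(k|k) = x(k)\<close> and \<open>u(k) = v(k|k)\<close>, state directly that \<open>x(k) \<in> \<X>\<^sub>i\<close>,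
  \<open>u(k) \<in> \<U>\<^sub>i\<close> and \<open>C(x(k) - x\<^sub>r\<^sub>e\<^sub>f(k)) \<in> C\<Z>\<^sub>i\<close>. The last one writes \<open>C x\<^sub>r\<^sub>e\<^sub>f(k)\<close> as
  \<open>y(k) + (-C)e\<close> with \<open>e \<in> \<Z>\<^sub>i\<close>, so \<open>y(k) \<in> \<O>\<close> would put the reference in the tightened
  obstacle \<open>\<O> \<oplus> (-C)\<Z>\<^sub>i\<close>, which it avoids by assumption.\<close>

lemma pdiff_zero [simp]: "pdiff S {0} = S"
  unfolding pdiff_def msum_def by auto

lemma limg_zero [simp]: "limg G {0} = {0}"
  unfolding limg_def by simp

lemma notin_if_tracks_tightened_reference:
  assumes ref_safe: "C *v r \<notin> msum S (limg (- C) Z)"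
    and tracks: "C *v (x - r) \<in> limg C Z"
  shows "C *v x \<notin> S"
proof
  assume "C *v x \<in> S"
  obtain e where "e \<in> Z" and "C *v (x - r) = C *v e"
    using tracks unfolding limg_def by auto
  moreover have "(- C) *v e = - (C *v e)"
    by (simp add: vec_eq_iff matrix_vector_mult_def sum_negf)
  ultimately have "C *v r = C *v x + (- C) *v e"
    by (simp add: matrix_vector_mult_diff_distrib algebra_simps)
  with \<open>C *v x \<in> S\<close> \<open>e \<in> Z\<close> have "C *v r \<in> msum S (limg (- C) Z)"
    unfolding msum_def limg_def by blast
  with ref_safe show False ..
qed

lemma notin_obstacles_iff:
  "y \<notin> obstacles E f q H \<longleftrightarrow> (\<forall>l\<in>{1..H}. \<exists>a < q l. E l a \<bullet> y \<ge> f l a)"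
  unfolding obstacles_def obst_def by (auto simp: not_less)

lemma low_feasible_initial_constraints:
  assumes "low_feasible A B C K M Xi Ui Zi Wi xk xref i k z v" and "M > 0"
  shows "xk \<in> Xi i" and "v 0 \<in> Ui i" and "C *v (xk - xref k) \<in> limg C (Zi i)"
proof -
  have "0 < M - k mod M"
    using \<open>M > 0\<close> by (simp add: less_imp_diff_less)
  with assms(1) have "z 0 = xk \<and> z 0 \<in> Xi i \<and> v 0 \<in> Ui i
      \<and> C *v (z 0 - xref k) \<in> limg C (Zi i)"
    unfolding low_feasible_def Let_def by fastforce
  then show "xk \<in> Xi i" and "v 0 \<in> Ui i" and "C *v (xk - xref k) \<in> limg C (Zi i)"
    by auto
qed

lemma plan_optimal_mode_range:
  "plan_optimal A B C K M N Nw Xi Ui Zi Ii Xf Obs ax au xgoal \<xi> xp up i \<Longrightarrow> i \<in> {1..Nw}"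
  unfolding plan_optimal_def plan_feasible_def by blast

theorem proposition2:
  fixes A :: "real^'n^'n" and B :: "real^'m^'n" and C :: "real^'n^'p"
    and K :: "real^'n^'m"
    and x :: "nat \<Rightarrow> real^'n" and u :: "nat \<Rightarrow> real^'m" and w :: "nat \<Rightarrow> real^'n"
    and y :: "nat \<Rightarrow> real^'p"
    and X :: "(real^'n) set" and U :: "(real^'m) set"
    and E :: "nat \<Rightarrow> nat \<Rightarrow> real^'p" and f :: "nat \<Rightarrow> nat \<Rightarrow> real" and q :: "nat \<Rightarrow> nat"
    and H Nw M N :: nat
    and Xi :: "nat \<Rightarrow> (real^'n) set" and Ui :: "nat \<Rightarrow> (real^'m) set"
    and Wi Zi Xf :: "nat \<Rightarrow> (real^'n) set"
    and Ii :: "nat \<Rightarrow> ((real^'n) \<times> (real^'m)) set"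
    and ax au :: real and xgoal :: "real^'n"
    and Q P :: "real^'n^'n" and R :: "real^'m^'m"
    and kp k i :: nat and xp :: "nat \<Rightarrow> real^'n" and up :: "nat \<Rightarrow> real^'m"
    and xref :: "nat \<Rightarrow> real^'n"
    and z :: "nat \<Rightarrow> real^'n" and v :: "nat \<Rightarrow> real^'m"
  assumes dyn: "\<And>t. x (Suc t) = A *v x t + B *v u t + w t"
    and outp: "\<And>t. y t = C *v x t"
    and X_cc: "closed X" "convex X" and U_cc: "closed U" "convex U"
    and obst_poly: "\<And>l. l \<in> {1..H} \<Longrightarrow> \<exists>S. polytope S \<and> obst E f q l = interior S"
    and Xi_sets: "\<And>j. j \<in> {1..Nw} \<Longrightarrow> polyhedron (Xi j) \<and> Xi j \<subseteq> X"
    and Ui_sets: "\<And>j. j \<in> {1..Nw} \<Longrightarrow> polyhedron (Ui j) \<and> Ui j \<subseteq> U"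
    and Wi_sets: "\<And>j. j \<in> {1..Nw} \<Longrightarrow> polytope (Wi j)"
    and A1: "\<And>j t. j \<in> {1..Nw} \<Longrightarrow> x t \<in> Xi j \<Longrightarrow> u t \<in> Ui j \<Longrightarrow> w t \<in> Wi j"
    and K_stab: "schur_stable (A + B ** K)"
    and Zi_sets: "\<And>j. j \<in> {1..Nw} \<Longrightarrow> polytope (Zi j)
                   \<and> msum (limg (A + B ** K) (Zi j)) (Wi j) \<subseteq> Zi j"
    and M_gt: "M > 1"
    and A3: "\<And>j xp0 up0 l. j \<in> {1..Nw} \<Longrightarrow> (xp0, up0) \<in> Ii j \<Longrightarrow> l \<in> {1..M-1} \<Longrightarrow>
               interp A B xp0 up0 l \<in> pdiff (Xi j) (Zi j)
             \<and> C *v interp A B xp0 up0 l \<notin> msum (obstacles E f q H) (limg (- C) (Zi j))"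
    and weights: "ax \<ge> 0" "au \<ge> 0"
    and QPR: "pos_def Q" "pos_def P" "pos_def R"
    and plan_opt: "plan_optimal A B C K M N Nw Xi Ui Zi Ii Xf (obstacles E f q H)
                     ax au xgoal (x (kp * M)) xp up i"
    and xref_def: "\<And>j. j \<le> M \<Longrightarrow> xref (kp * M + j) = interp A B (xp 0) (up 0) j"
    and xref_safe: "\<And>j. j \<le> M \<Longrightarrow>
                      C *v xref (kp * M + j) \<notin> msum (obstacles E f q H) (limg (- C) (Zi i))"
    and k_range: "k \<in> {kp * M..<kp * M + M}"
    and low_opt: "low_optimal A B C K M Xi Ui Zi Wi Q R P (x k) xref i k z v"
    and u_applied: "u k = v 0"
  shows "x k \<in> Xi i \<and> Xi i \<subseteq> X \<and> u k \<in> Ui i \<and> Ui i \<subseteq> U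
         \<and> y k = C *v x k \<and> y k \<notin> obstacles E f q H
         \<and> (\<forall>l\<in>{1..H}. \<exists>a < q l. E l a \<bullet> y k \<ge> f l a)"
proof -
  have iN: "i \<in> {1..Nw}"
    using plan_optimal_mode_range[OF plan_opt] .
  have lf: "low_feasible A B C K M Xi Ui Zi Wi (x k) xref i k z v"
    using low_opt unfolding low_optimal_def by blast
  note initial = low_feasible_initial_constraints[OF lf order.strict_trans[OF zero_less_one M_gt]]
  have "kp * M + (k - kp * M) = k" and "k - kp * M \<le> M"
    using k_range by auto
  then have "C *v xref k \<notin> msum (obstacles E f q H) (limg (- C) (Zi i))"
    using xref_safe[of "k - kp * M"] by metis
  then have "y k \<notin> obstacles E f q H"
    using notin_if_tracks_tightened_reference initial(3) outp[of k] by metis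
  then show ?thesis
    using initial(1,2) u_applied outp[of k] Xi_sets[OF iN] Ui_sets[OF iN]
    by (simp add: notin_obstacles_iff)
qed

end
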